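(* Let $\Sigma$ be a finite alphabet, let $y^* = y^*_1 \cdots y^*_n \in \Sigma^*$, let $p \in \Sigma^*$, and let $m(p) = \min_{0 \le j \le n} D(p, y^*_{1..j})$. Then $$\min_{s \in \Sigma^*} D(p\,s,\; y^* ) \;=\; m(p).$$ Moreover, the set of minimizers is exactly $$\{\, s \in \Sigma^* : D(p\,s, y^* ) = m(p)\,\} \;=\; \{\, y^*_{j+1..n} \;:\; 0 \le j \le n,\ D(p, y^*_{1..j}) = m(p) \,\}.$$ In words: the optimal completions of $p$ are exactly the suffixes $y^*_{j+1..n}$ of $y^*$ for which the prefix $y^*_{1..j}$ attains the minimum edit distance to $p$.
   Context: $D(u,v)$ denotes the Levenshtein edit distance between finite strings $u,v$: the minimum number of single-symbol insertions, deletions and substitutions needed to transform $u$ into $v$. For a string $y^*$ of length $n$, $y^*_{1..j}$ denotes its prefix of length $j$ and $y^*_{j+1..n}$ the complementary suffix; $y^*_{1..0}$ and $y^*_{n+1..n}$ are the empty string. Juxtaposition $p\,s$ denotes concatenation. *)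

theory Defs
  imports Main
begin

inductive edit_step :: "'a list \<Rightarrow> 'a list \<Rightarrow> bool" where
  ins: "edit_step (xs @ ys) (xs @ [a] @ ys)"
| del: "edit_step (xs @ [a] @ ys) (xs @ ys)"
| subst: "edit_step (xs @ [a] @ ys) (xs @ [b] @ ys)"

definition lev :: "'a list \<Rightarrow> 'a list \<Rightarrow> nat" where
  "lev u v = (LEAST k. (edit_step ^^ k) u v)"

end

theory Submission
  imports Defs
begin

text \<open>Each single edit of a concatenation p s acts on p or on s alone, so an edit script
  turning p s into y* splits into one turning p into some prefix y*_{1..j} and one turning s
  into the complementary suffix. Hence D(p s, y*) \<ge> D(p, y*_{1..j}) + D(s, y*_{j+1..n}) \<ge> m(p),
  with equality only if s = y*_{j+1..n} and D(p, y*_{1..j}) = m(p). Conversely, editing p into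
  y*_{1..j} turns p y*_{j+1..n} into y*.\<close>

lemma relpowp_map:
  assumes "\<And>x y. r x y \<Longrightarrow> r (f x) (f y)"
  shows "(r ^^ k) x y \<Longrightarrow> (r ^^ k) (f x) (f y)"
proof (induction k arbitrary: y)
  case 0
  then show ?case by simp
next
  case (Suc k)
  then obtain z where "(r ^^ k) x z" "r z y" by (auto elim: relpowp_Suc_E)
  then show ?case using Suc.IH assms relpowp_Suc_I by metis
qed

lemma length_le_1_cases:
  assumes "length xs \<le> 1"
  obtains "xs = []" | a where "xs = [a]"
  using assms by (cases xs) auto

lemma edit_step_iff:
  "edit_step u w \<longleftrightarrow>
     (\<exists>xs l r ys. u = xs @ l @ ys \<and> w = xs @ r @ ys \<and> length l \<le> 1 \<and> length r \<le> 1
        \<and> (l \<noteq> [] \<or> r \<noteq> []))"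
  (is "_ \<longleftrightarrow> (\<exists>xs l r ys. ?local xs l r ys)")
proof
  assume "edit_step u w"
  then show "\<exists>xs l r ys. ?local xs l r ys"
  proof cases
    case (ins xs ys a)
    then have "?local xs [] [a] ys" by simp
    then show ?thesis by blast
  next
    case (del xs a ys)
    then have "?local xs [a] [] ys" by simp
    then show ?thesis by blast
  next
    case (subst xs a ys b)
    then have "?local xs [a] [b] ys" by simp
    then show ?thesis by blast
  qed
next
  assume "\<exists>xs l r ys. ?local xs l r ys"
  then obtain xs l r ys where u: "u = xs @ l @ ys" and w: "w = xs @ r @ ys"
    and l: "length l \<le> 1" and r: "length r \<le> 1" and nonempty: "l \<noteq> [] \<or> r \<noteq> []"
    by blast
  show "edit_step u w"
  proof (cases rule: length_le_1_cases[OF l])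
    case 1
    then obtain b where "r = [b]"
      using nonempty by (cases rule: length_le_1_cases[OF r]) auto
    with 1 show ?thesis
      unfolding u w using edit_step.ins by fastforce
  next
    case (2 a)
    then show ?thesis
      unfolding u w by (cases rule: length_le_1_cases[OF r])
        (auto intro: edit_step.del[simplified] edit_step.subst[simplified])
  qed
qed

lemma edit_step_append_context:
  "edit_step u w \<Longrightarrow> edit_step (as @ u @ bs) (as @ w @ bs)"
  unfolding edit_step_iff by (metis append.assoc)

lemma edit_step_append_cases:
  assumes "edit_step (u @ v) x"
  shows "(\<exists>u'. edit_step u u' \<and> x = u' @ v) \<or> (\<exists>v'. edit_step v v' \<and> x = u @ v')"
proof -
  obtain xs l r ys where uv: "u @ v = xs @ l @ ys" and x: "x = xs @ r @ ys"
    and lr: "length l \<le> 1" "length r \<le> 1" "l \<noteq> [] \<or> r \<noteq> []"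
    using assms unfolding edit_step_iff by blast
  define i where "i = length u - length xs - length l"
  \<comment> \<open>The edited window l has length at most 1, so it cannot straddle the boundary.\<close>
  show ?thesis
  proof (cases "length xs + length l \<le> length u")
    case True
    then have "u = xs @ l @ take i ys" "v = drop i ys"
      using arg_cong[OF uv, of "take (length u)"] arg_cong[OF uv, of "drop (length u)"]
      by (simp_all add: i_def)
    then have "edit_step u (xs @ r @ take i ys) \<and> x = (xs @ r @ take i ys) @ v"
      using x lr unfolding edit_step_iff by fastforce
    then show ?thesis by blast
  next
    case False
    then have "length u \<le> length xs" using lr(1) by linarith
    then have "u = take (length u) xs" "v = drop (length u) xs @ l @ ys"
      using arg_cong[OF uv, of "take (length u)"] arg_cong[OF uv, of "drop (length u)"]
      by simp_all
    then have "edit_step v (drop (length u) xs @ r @ ys) \<and> x = u @ (drop (length u) xs @ r @ ys)"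
      using x lr unfolding edit_step_iff by (metis append_take_drop_id append.assoc)
    then show ?thesis by blast
  qed
qed

lemma edit_step_relpowp_length: "(edit_step ^^ (length u + length v)) u v"
proof -
  have delete_all: "(edit_step ^^ length u) u []" for u :: "'a list"
  proof (induction u)
    case (Cons a u)
    have "edit_step (a # u) u" using edit_step.del[of "[]" a u] by simp
    from relpowp_Suc_I2[OF this Cons.IH] show ?case by simp
  qed simp
  have insert_all: "(edit_step ^^ length v) [] v" for v :: "'a list"
  proof (induction v)
    case (Cons a v)
    have "edit_step v (a # v)" using edit_step.ins[of "[]" v a] by simp
    from relpowp_Suc_I[OF Cons.IH this] show ?case by simp
  qed simp
  show ?thesis using relpowp_trans[OF delete_all insert_all] .
qed

lemma edit_step_relpowp_lev: "(edit_step ^^ lev u v) u v"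
  unfolding lev_def by (rule LeastI) (rule edit_step_relpowp_length)

lemma lev_le_relpowp: "(edit_step ^^ k) u v \<Longrightarrow> lev u v \<le> k"
  unfolding lev_def by (rule Least_le)

lemma lev_self [simp]: "lev u u = 0"
  using lev_le_relpowp[of 0 u u] by simp

lemma lev_eq_0_iff: "lev u v = 0 \<longleftrightarrow> u = v"
  using edit_step_relpowp_lev[of u v] by auto

lemma lev_edit_step: "edit_step u v \<Longrightarrow> lev u v \<le> 1"
  using lev_le_relpowp[of 1 u v] by (simp only: relpowp_1)

lemma lev_triangle: "lev u w \<le> lev u v + lev v w"
  by (rule lev_le_relpowp) (rule relpowp_trans[OF edit_step_relpowp_lev edit_step_relpowp_lev])

lemma lev_append_le: "lev (u @ v) (u' @ v') \<le> lev u u' + lev v v'"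
proof (rule lev_le_relpowp, rule relpowp_trans)
  show "(edit_step ^^ lev u u') (u @ v) (u' @ v)"
    using relpowp_map[of edit_step "\<lambda>x. [] @ x @ v"] edit_step_append_context
      edit_step_relpowp_lev by fastforce
  show "(edit_step ^^ lev v v') (u' @ v) (u' @ v')"
    using relpowp_map[of edit_step "\<lambda>x. u' @ x @ []"] edit_step_append_context
      edit_step_relpowp_lev by fastforce
qed

lemma edit_step_append_split:
  assumes "edit_step (u @ v) x"
  obtains u' v' where "x = u' @ v'" "lev u u' + lev v v' \<le> 1"
  using edit_step_append_cases[OF assms] lev_edit_step lev_self by (metis add.commute add_0)

lemma relpowp_edit_step_append_split:
  "(edit_step ^^ k) (u @ v) w \<Longrightarrow> \<exists>j \<le> length w. lev u (take j w) + lev v (drop j w) \<le> k"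
proof (induction k arbitrary: u v)
  case 0
  then show ?case by (intro exI[of _ "length u"]) auto
next
  case (Suc k)
  then obtain x where x: "edit_step (u @ v) x" "(edit_step ^^ k) x w"
    using relpowp_Suc_D2 by metis
  obtain u' v' where uv: "x = u' @ v'" "lev u u' + lev v v' \<le> 1"
    using edit_step_append_split[OF x(1)] .
  obtain j where "j \<le> length w" "lev u' (take j w) + lev v' (drop j w) \<le> k"
    using Suc.IH x(2) uv(1) by blast
  moreover have "lev u (take j w) \<le> lev u u' + lev u' (take j w)"
    and "lev v (drop j w) \<le> lev v v' + lev v' (drop j w)"
    by (rule lev_triangle)+
  ultimately show ?case using uv(2) by (intro exI[of _ j]) auto
qed

lemma lev_append_split:
  "\<exists>j \<le> length w. lev u (take j w) + lev v (drop j w) \<le> lev (u @ v) w"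
  using relpowp_edit_step_append_split[OF edit_step_relpowp_lev] .

definition prefix_lev :: "'a list \<Rightarrow> 'a list \<Rightarrow> nat" where
  "prefix_lev p w = Min ((\<lambda>j. lev p (take j w)) ` {0..length w})"

lemma prefix_lev_le: "j \<le> length w \<Longrightarrow> prefix_lev p w \<le> lev p (take j w)"
  unfolding prefix_lev_def by (rule Min_le) auto

lemma prefix_lev_attained: obtains j where "j \<le> length w" "lev p (take j w) = prefix_lev p w"
proof -
  have "prefix_lev p w \<in> (\<lambda>j. lev p (take j w)) ` {0..length w}"
    unfolding prefix_lev_def by (rule Min_in) auto
  then show thesis using that by auto
qed

lemma prefix_lev_le_lev_append: "prefix_lev p w \<le> lev (p @ s) w"
  using lev_append_split[of w p s] prefix_lev_le[of _ w p] by fastforce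

lemma lev_append_drop_le: "lev (p @ drop j w) w \<le> lev p (take j w)"
  using lev_append_le[of p "drop j w" "take j w" "drop j w"] by simp

lemma lev_append_eq_prefix_lev_iff:
  "lev (p @ s) w = prefix_lev p w \<longleftrightarrow>
     (\<exists>j \<le> length w. s = drop j w \<and> lev p (take j w) = prefix_lev p w)"
proof
  assume opt: "lev (p @ s) w = prefix_lev p w"
  obtain j where j: "j \<le> length w" "lev p (take j w) + lev s (drop j w) \<le> lev (p @ s) w"
    using lev_append_split by blast
  with opt prefix_lev_le[of j w p]
  have "lev s (drop j w) = 0" "lev p (take j w) = prefix_lev p w" by auto
  with j(1) show "\<exists>j \<le> length w. s = drop j w \<and> lev p (take j w) = prefix_lev p w"
    by (auto simp: lev_eq_0_iff)
next
  assume "\<exists>j \<le> length w. s = drop j w \<and> lev p (take j w) = prefix_lev p w"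
  then show "lev (p @ s) w = prefix_lev p w"
    using lev_append_drop_le prefix_lev_le_lev_append by (metis antisym)
qed

theorem mainTheorem2:
  fixes ys p :: "'a::finite list"
  defines "m \<equiv> Min ((\<lambda>j. lev p (take j ys)) ` {0..length ys})"
  shows "(INF s. lev (p @ s) ys) = m
     \<and> {s. lev (p @ s) ys = m} = {drop j ys | j. j \<le> length ys \<and> lev p (take j ys) = m}"
proof
  have m: "m = prefix_lev p ys" unfolding m_def prefix_lev_def ..
  obtain j where "j \<le> length ys" "lev p (take j ys) = m"
    using prefix_lev_attained m by metis
  then have "lev (p @ drop j ys) ys = m"
    unfolding m by (auto simp: lev_append_eq_prefix_lev_iff)
  then have "m \<in> range (\<lambda>s. lev (p @ s) ys)" by (metis rangeI)
  then show "(INF s. lev (p @ s) ys) = m"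
    by (rule cInf_eq_minimum) (auto simp: m prefix_lev_le_lev_append)
  show "{s. lev (p @ s) ys = m} = {drop j ys | j. j \<le> length ys \<and> lev p (take j ys) = m}"
    unfolding m by (auto simp: lev_append_eq_prefix_lev_iff)
qed

end
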